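(* Let $n\in\mathbb{N}$ and let $\mathcal{F}_1,\dots,\mathcal{F}_{n+1}$ be non-empty collections of closed intervals in $\mathbb{R}$ such that every colorful $(n+1)$-tuple is $n$-pierceable. Then there exist $i\in[n+1]$ and, for every $k\in[n+1]$ with $k\neq i$, an interval $F_k\in\mathcal{F}_k$ such that $\mathcal{F}_i\cup\{F_k: k\in[n+1],\,k\neq i\}$ is $n$-pierceable.
   Context: A family $\mathcal{F}$ of subsets of $\mathbb{R}$ is $n$-pierceable if there is $A\subseteq\mathbb{R}$ with $|A|\le n$ meeting every member of $\mathcal{F}$. A colorful $(n+1)$-tuple from $\mathcal{F}_1,\dots,\mathcal{F}_{n+1}$ is a tuple $(C_1,\dots,C_{n+1})$ with $C_j\in\mathcal{F}_{i_j}$ for pairwise distinct indices $i_1,\dots,i_{n+1}$ (i.e., one member from each family). *)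

theory Defs
  imports Main Complex_Main
begin

definition pierceable :: "nat \<Rightarrow> real set set \<Rightarrow> bool" where
  "pierceable n \<F> \<longleftrightarrow> (\<exists>A. finite A \<and> card A \<le> n \<and> (\<forall>S\<in>\<F>. A \<inter> S \<noteq> {}))"

definition closed_interval :: "real set \<Rightarrow> bool" where
  "closed_interval S \<longleftrightarrow> (\<exists>a b. a \<le> b \<and> S = {a..b})"

end

theory Submission
  imports Defs
begin

(* Induction on the number of families.  Let p be the leftmost right endpoint over all
   families and let a be a family whose right endpoints approach p.  Every interval not
   containing p lies strictly to the right of p, so for any colorful choice of such
   intervals from the other families some member of F a is disjoint from all of them and
   needs a point of its own: the remaining families, cut down to their intervals avoiding p,
   satisfy the hypothesis with one point less.  A single extra point then pierces both the
   discarded intervals of the family i found by induction and a chosen member of F a: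
   either p itself, or the left endpoint of a member of F a ending before every discarded
   interval of F i does.  If the right endpoints of some family are unbounded below, that
   family alone plays the role of F a and nothing is discarded. *)

lemma closed_interval_mem_iff:
  assumes "closed_interval S"
  shows "x \<in> S \<longleftrightarrow> Inf S \<le> x \<and> x \<le> Sup S"
  using assms unfolding closed_interval_def by auto

lemma closed_interval_Inf_in:
  assumes "closed_interval S"
  shows "Inf S \<in> S"
  using assms unfolding closed_interval_def by auto

lemma pierceable_zero_iff: "pierceable 0 \<F> \<longleftrightarrow> \<F> = {}"
  unfolding pierceable_def by auto

lemma pierceable_mono: "pierceable n \<F> \<Longrightarrow> \<G> \<subseteq> \<F> \<Longrightarrow> pierceable n \<G>"
  unfolding pierceable_def by blast

lemma pierceable_Suc_union:
  assumes "pierceable n \<F>" and "\<forall>S\<in>\<G>. q \<in> S"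
  shows "pierceable (Suc n) (\<F> \<union> \<G>)"
proof -
  obtain A where "finite A" "card A \<le> n" "\<forall>S\<in>\<F>. A \<inter> S \<noteq> {}"
    using assms(1) unfolding pierceable_def by blast
  then show ?thesis
    unfolding pierceable_def using assms(2)
    by (intro exI[of _ "insert q A"]) (auto simp: card_insert_if)
qed

lemma pierceable_card_image:
  assumes "finite K" and "\<forall>k\<in>K. C k \<noteq> {}"
  shows "pierceable (card K) (C ` K)"
  unfolding pierceable_def using assms
  by (intro exI[of _ "(\<lambda>k. SOME x. x \<in> C k) ` K"]) (auto simp: card_image_le some_in_eq)

lemma pierceable_insert_disjoint:
  assumes "pierceable (Suc n) (insert J \<C>)" and "\<forall>S\<in>\<C>. J \<inter> S = {}"
  shows "pierceable n \<C>"
proof -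
  obtain A where A: "finite A" "card A \<le> Suc n" "\<forall>S\<in>insert J \<C>. A \<inter> S \<noteq> {}"
    using assms(1) unfolding pierceable_def by blast
  then obtain x where "x \<in> A" "x \<in> J" by blast
  with A assms(2) show ?thesis
    unfolding pierceable_def by (intro exI[of _ "A - {x}"]) auto
qed

lemma exists_choice_pierceable_card:
  assumes "finite K" and "\<forall>k\<in>K. F k \<noteq> {}" and "\<forall>k\<in>K. {} \<notin> F k"
  shows "\<exists>G. (\<forall>k\<in>K. G k \<in> F k) \<and> pierceable (card K) (G ` K)"
proof -
  obtain G where G: "\<forall>k\<in>K. G k \<in> F k"
    using assms(2) bchoice[of K "\<lambda>k S. S \<in> F k"] by blast
  moreover have "pierceable (card K) (G ` K)"
    using assms(1,3) G by (intro pierceable_card_image) fastforce+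
  ultimately show ?thesis by blast
qed

definition colorful_pierceable :: "nat \<Rightarrow> 'i set \<Rightarrow> ('i \<Rightarrow> real set set) \<Rightarrow> bool" where
  "colorful_pierceable n I F \<longleftrightarrow> (\<forall>C. (\<forall>i\<in>I. C i \<in> F i) \<longrightarrow> pierceable n (C ` I))"

definition pierceable_with_full_family :: "nat \<Rightarrow> 'i set \<Rightarrow> ('i \<Rightarrow> real set set) \<Rightarrow> bool" where
  "pierceable_with_full_family n I F \<longleftrightarrow>
     (\<exists>i\<in>I. \<exists>G. (\<forall>k\<in>I - {i}. G k \<in> F k) \<and> pierceable n (F i \<union> G ` (I - {i})))"

definition is_reduction :: "'i set \<Rightarrow> ('i \<Rightarrow> real set set) \<Rightarrow> 'i \<Rightarrow> ('i \<Rightarrow> real set set) \<Rightarrow> bool" where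
  "is_reduction I F a F' \<longleftrightarrow> (\<forall>k. F' k \<subseteq> F k) \<and>
     (\<forall>C. (\<forall>k\<in>I - {a}. C k \<in> F' k) \<longrightarrow> (\<exists>J\<in>F a. \<forall>k\<in>I - {a}. J \<inter> C k = {})) \<and>
     (\<forall>k\<in>I - {a}. \<exists>J\<in>F a. \<exists>q\<in>J. \<forall>M\<in>F k - F' k. q \<in> M)"

lemma is_reductionI:
  assumes "\<And>k. F' k \<subseteq> F k"
    and "\<And>C. \<forall>k\<in>I - {a}. C k \<in> F' k \<Longrightarrow> \<exists>J\<in>F a. \<forall>k\<in>I - {a}. J \<inter> C k = {}"
    and "\<And>k. k \<in> I - {a} \<Longrightarrow> \<exists>J\<in>F a. \<exists>q\<in>J. \<forall>M\<in>F k - F' k. q \<in> M"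
  shows "is_reduction I F a F'"
  using assms unfolding is_reduction_def by simp

lemma is_reductionD:
  assumes "is_reduction I F a F'"
  shows is_reduction_subset: "F' k \<subseteq> F k"
    and is_reduction_avoids:
      "\<forall>k\<in>I - {a}. C k \<in> F' k \<Longrightarrow> \<exists>J\<in>F a. \<forall>k\<in>I - {a}. J \<inter> C k = {}"
    and is_reduction_common_point:
      "k \<in> I - {a} \<Longrightarrow> \<exists>J\<in>F a. \<exists>q\<in>J. \<forall>M\<in>F k - F' k. q \<in> M"
  using assms unfolding is_reduction_def by simp_all

lemma colorful_pierceable_reduction:
  assumes "colorful_pierceable (Suc n) I F" and "a \<in> I" and "is_reduction I F a F'"
  shows "colorful_pierceable n (I - {a}) F'"
  unfolding colorful_pierceable_def
proof (intro allI impI)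
  fix C assume C: "\<forall>k\<in>I - {a}. C k \<in> F' k"
  obtain J where J: "J \<in> F a" "\<forall>k\<in>I - {a}. J \<inter> C k = {}"
    using is_reduction_avoids[OF assms(3) C] by blast
  have "\<forall>k\<in>I. (C(a := J)) k \<in> F k"
    using C J(1) is_reduction_subset[OF assms(3)] by auto
  then have "pierceable (Suc n) ((C(a := J)) ` I)"
    using assms(1) unfolding colorful_pierceable_def by blast
  moreover have "(C(a := J)) ` I = insert J (C ` (I - {a}))"
    using assms(2) by auto
  ultimately show "pierceable n (C ` (I - {a}))"
    using J(2) pierceable_insert_disjoint by simp
qed

lemma pierceable_with_full_family_Suc:
  assumes "a \<in> I" and red: "is_reduction I F a F'"
    and i: "i \<in> I - {a}" and G: "\<forall>k\<in>I - {a} - {i}. G k \<in> F k"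
    and pierce: "pierceable n (F' i \<union> G ` (I - {a} - {i}))"
  shows "pierceable_with_full_family (Suc n) I F"
proof -
  obtain J q where J: "J \<in> F a" "q \<in> J" and q: "\<forall>M\<in>F i - F' i. q \<in> M"
    using is_reduction_common_point[OF red i] by blast
  let ?G = "G(a := J)"
  have "pierceable (Suc n) ((F' i \<union> G ` (I - {a} - {i})) \<union> insert J (F i - F' i))"
    using pierce J(2) q by (intro pierceable_Suc_union) auto
  moreover have "F i \<union> ?G ` (I - {i}) \<subseteq> (F' i \<union> G ` (I - {a} - {i})) \<union> insert J (F i - F' i)"
    using assms(1) i by auto
  ultimately have "pierceable (Suc n) (F i \<union> ?G ` (I - {i}))"
    by (rule pierceable_mono)
  moreover have "\<forall>k\<in>I - {i}. ?G k \<in> F k"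
    using G J(1) by auto
  ultimately show ?thesis
    using i unfolding pierceable_with_full_family_def by blast
qed

lemma exists_interval_disjoint_from_finite:
  assumes "finite K" and C: "\<forall>k\<in>K. closed_interval (C k) \<and> t < Inf (C k)"
    and approach: "\<forall>x>t. \<exists>J\<in>\<J>. Sup J < x" and "\<forall>J\<in>\<J>. closed_interval J"
  shows "\<exists>J\<in>\<J>. \<forall>k\<in>K. J \<inter> C k = {}"
proof -
  define x where "x = Min (insert (t + 1) ((\<lambda>k. Inf (C k)) ` K))"
  have "t < x" and x: "\<forall>k\<in>K. x \<le> Inf (C k)"
    unfolding x_def using assms(1) C by auto
  then obtain J where "J \<in> \<J>" "Sup J < x"
    using approach by blast
  moreover have "J \<inter> C k = {}" if "k \<in> K" for k
    using that x C \<open>Sup J < x\<close> \<open>J \<in> \<J>\<close> assms(4)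
    by (force simp: closed_interval_mem_iff)
  ultimately show ?thesis by blast
qed

lemma is_reduction_if_unbounded:
  assumes "finite I" and "a \<in> I" and intervals: "\<forall>k\<in>I. \<forall>S\<in>F k. closed_interval S"
    and "F a \<noteq> {}" and unbounded: "\<not> bdd_below (Sup ` F a)"
  shows "is_reduction I F a F"
proof -
  have approach: "\<exists>J\<in>F a. Sup J < x" for x
    using unbounded unfolding bdd_below_def by (auto simp: not_le)
  show ?thesis
  proof (rule is_reductionI)
    fix C assume C: "\<forall>k\<in>I - {a}. C k \<in> F k"
    obtain m where "\<forall>k\<in>I - {a}. m \<le> Inf (C k)"
      using bdd_below_finite[of "(\<lambda>k. Inf (C k)) ` (I - {a})"] assms(1)
      unfolding bdd_below_def by auto
    then show "\<exists>J\<in>F a. \<forall>k\<in>I - {a}. J \<inter> C k = {}"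
      using C intervals assms(1,2) approach
      by (intro exists_interval_disjoint_from_finite[where t = "m - 1"]) force+
  next
    obtain J where "J \<in> F a"
      using assms(4) by blast
    moreover have "Inf J \<in> J"
      using assms(2) intervals \<open>J \<in> F a\<close> closed_interval_Inf_in by blast
    ultimately show "\<exists>J\<in>F a. \<exists>q\<in>J. \<forall>M\<in>F k - F k. q \<in> M" for k
      by blast
  qed simp
qed

lemma is_reduction_avoiding_point:
  assumes "finite I" and intervals: "\<forall>k\<in>I. \<forall>S\<in>F k. closed_interval S" and "a \<in> I"
    and right: "\<forall>k\<in>I. \<forall>S\<in>F k. p \<le> Sup S"
    and approach: "\<forall>x>p. \<exists>J\<in>F a. Sup J < x"
    and common_point: "\<forall>k\<in>I - {a}. \<exists>J\<in>F a. \<exists>q\<in>J. \<forall>M\<in>F k. p \<in> M \<longrightarrow> q \<in> M"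
  shows "is_reduction I F a (\<lambda>k. {S \<in> F k. p \<notin> S})"
proof (rule is_reductionI)
  fix C assume C: "\<forall>k\<in>I - {a}. C k \<in> {S \<in> F k. p \<notin> S}"
  show "\<exists>J\<in>F a. \<forall>k\<in>I - {a}. J \<inter> C k = {}"
  proof (rule exists_interval_disjoint_from_finite[where t = p])
    show "\<forall>k\<in>I - {a}. closed_interval (C k) \<and> p < Inf (C k)"
      using C intervals right by (force simp: closed_interval_mem_iff)
  qed (use assms(1,3) intervals approach in auto)
next
  fix k assume "k \<in> I - {a}"
  then obtain J q where "J \<in> F a" "q \<in> J" "\<forall>M\<in>F k. p \<in> M \<longrightarrow> q \<in> M"
    using common_point by blast
  then show "\<exists>J\<in>F a. \<exists>q\<in>J. \<forall>M\<in>F k - {S \<in> F k. p \<notin> S}. q \<in> M"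
    by blast
qed auto

lemma exists_reduction_if_bounded:
  assumes "finite I" and "I \<noteq> {}" and intervals: "\<forall>k\<in>I. \<forall>S\<in>F k. closed_interval S"
    and nonempty: "\<forall>k\<in>I. F k \<noteq> {}" and bounded: "\<forall>k\<in>I. bdd_below (Sup ` F k)"
  shows "\<exists>a\<in>I. \<exists>F'. is_reduction I F a F'"
proof -
  define r where "r k = Inf (Sup ` F k)" for k
  define p where "p = Min (r ` I)"
  have r_le: "\<forall>k\<in>I. \<forall>S\<in>F k. r k \<le> Sup S"
    unfolding r_def using bounded by (auto intro: cInf_lower)
  have p_le: "\<forall>k\<in>I. p \<le> r k"
    unfolding p_def using assms(1) by auto
  have right: "\<forall>k\<in>I. \<forall>S\<in>F k. p \<le> Sup S"
    using r_le p_le by force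
  have approach: "\<forall>x>p. \<exists>J\<in>F a. Sup J < x" if "a \<in> I" "r a = p" for a
    using that bounded nonempty cInf_less_iff[of "Sup ` F a"] unfolding r_def by auto
  show ?thesis
  proof (cases "\<exists>a\<in>I. r a = p \<and> (\<exists>J\<in>F a. p \<in> J)")
    case True
    then obtain a J where a: "a \<in> I" "r a = p" and "J \<in> F a" "p \<in> J" by blast
    then have "\<forall>k\<in>I - {a}. \<exists>J\<in>F a. \<exists>q\<in>J. \<forall>M\<in>F k. p \<in> M \<longrightarrow> q \<in> M"
      by blast
    with a show ?thesis
      using is_reduction_avoiding_point[OF assms(1) intervals a(1) right approach[OF a]] by blast
  next
    case p_free: False
    have "p \<in> r ` I"
      unfolding p_def using assms(1,2) by (intro Min_in) auto
    then obtain a where a: "a \<in> I" "r a = p" by blast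
    obtain J0 where "J0 \<in> F a"
      using nonempty a(1) by blast
    then have "Inf J0 \<in> J0"
      using intervals a(1) closed_interval_Inf_in by blast
    have "\<exists>J\<in>F a. \<exists>q\<in>J. \<forall>M\<in>F k. p \<in> M \<longrightarrow> q \<in> M" if k: "k \<in> I - {a}" for k
    proof (cases "r k = p")
      case True
      then have "\<forall>M\<in>F k. p \<notin> M"
        using p_free k by blast
      then show ?thesis
        using \<open>J0 \<in> F a\<close> \<open>Inf J0 \<in> J0\<close> by blast
    next
      case r_gt: False
      then obtain J where J: "J \<in> F a" "Sup J < r k"
        using approach[OF a] p_le k by force
      have "p \<notin> J"
        using p_free a J(1) by blast
      moreover have "p \<le> Sup J"
        using right a(1) J(1) by blast
      moreover have J_int: "closed_interval J"
        using intervals a(1) J(1) by blast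
      ultimately have "p < Inf J"
        using closed_interval_mem_iff[of J p] by auto
      have "Inf J \<in> J"
        using J_int by (rule closed_interval_Inf_in)
      have "Inf J \<in> M" if "M \<in> F k" "p \<in> M" for M
      proof -
        have M: "closed_interval M"
          using intervals k that(1) by blast
        have "Inf J \<le> Sup J"
          using \<open>Inf J \<in> J\<close> closed_interval_mem_iff[OF J_int] by auto
        moreover have "r k \<le> Sup M"
          using r_le k that(1) by blast
        moreover have "Inf M \<le> p"
          using that(2) closed_interval_mem_iff[OF M] by auto
        ultimately show ?thesis
          using M \<open>p < Inf J\<close> J(2) closed_interval_mem_iff[of M] by auto
      qed
      then show ?thesis
        using J(1) \<open>Inf J \<in> J\<close> by blast
    qed
    then show ?thesis
      using is_reduction_avoiding_point[OF assms(1) intervals a(1) right approach[OF a]] a(1)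
      by blast
  qed
qed

lemma exists_reduction:
  assumes "finite I" and "I \<noteq> {}" and "\<forall>k\<in>I. \<forall>S\<in>F k. closed_interval S"
    and "\<forall>k\<in>I. F k \<noteq> {}"
  obtains a F' where "a \<in> I" and "is_reduction I F a F'"
proof (cases "\<forall>k\<in>I. bdd_below (Sup ` F k)")
  case True
  then show ?thesis
    using exists_reduction_if_bounded[OF assms] that by meson
next
  case False
  then obtain a where a: "a \<in> I" "\<not> bdd_below (Sup ` F a)"
    by auto
  with assms have "is_reduction I F a F"
    by (intro is_reduction_if_unbounded) auto
  then show ?thesis
    by (rule that[OF a(1)])
qed

lemma pierceable_with_full_family_if_colorful:
  assumes "finite I" and "card I = Suc n" and "\<forall>k\<in>I. \<forall>S\<in>F k. closed_interval S"
    and "\<forall>k\<in>I. F k \<noteq> {}" and "colorful_pierceable n I F"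
  shows "pierceable_with_full_family n I F"
  using assms
proof (induction n arbitrary: I F)
  case 0
  obtain C where "\<forall>i\<in>I. C i \<in> F i"
    using "0.prems"(4) bchoice[of I "\<lambda>i S. S \<in> F i"] by blast
  then have "C ` I = {}"
    using "0.prems"(5) unfolding colorful_pierceable_def pierceable_zero_iff by blast
  then show ?case
    using "0.prems"(2) by auto
next
  case (Suc n)
  note fin = Suc.prems(1) and intervals = Suc.prems(3) and nonempty = Suc.prems(4)
  obtain a F' where a: "a \<in> I" and red: "is_reduction I F a F'"
    using fin Suc.prems(2) intervals nonempty exists_reduction[of I F] by force
  have card: "card (I - {a}) = Suc n"
    using fin a Suc.prems(2) by simp
  have "\<exists>i\<in>I - {a}. \<exists>G. (\<forall>k\<in>I - {a} - {i}. G k \<in> F k) \<and>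
          pierceable n (F' i \<union> G ` (I - {a} - {i}))"
  proof (cases "\<exists>k\<in>I - {a}. F' k = {}")
    case True
    then obtain k where k: "k \<in> I - {a}" "F' k = {}" by blast
    have "card (I - {a} - {k}) = n"
      using card fin k(1) by simp
    moreover have "\<forall>j\<in>I - {a} - {k}. {} \<notin> F j"
      using intervals closed_interval_Inf_in by blast
    ultimately obtain G where "\<forall>j\<in>I - {a} - {k}. G j \<in> F j"
      and "pierceable n (F' k \<union> G ` (I - {a} - {k}))"
      using exists_choice_pierceable_card[of "I - {a} - {k}" F] fin nonempty k(2) by auto
    then show ?thesis
      using k(1) by blast
  next
    case False
    have "colorful_pierceable n (I - {a}) F'"
      using Suc.prems(5) a red by (rule colorful_pierceable_reduction)
    moreover have "\<forall>k\<in>I - {a}. \<forall>S\<in>F' k. closed_interval S"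
      using intervals is_reduction_subset[OF red] by blast
    ultimately have "pierceable_with_full_family n (I - {a}) F'"
      using Suc.IH[of "I - {a}" F'] fin card False by blast
    then show ?thesis
      using is_reduction_subset[OF red] unfolding pierceable_with_full_family_def by blast
  qed
  then show ?case
    using pierceable_with_full_family_Suc[OF a red] by blast
qed

theorem theorem7:
  fixes n :: nat and F :: "nat \<Rightarrow> real set set"
  assumes intervals: "\<forall>i\<in>{1..n+1}. \<forall>S\<in>F i. closed_interval S"
    and nonempty: "\<forall>i\<in>{1..n+1}. F i \<noteq> {}"
    and colorful: "\<forall>C. (\<forall>i\<in>{1..n+1}. C i \<in> F i) \<longrightarrow> pierceable n (C ` {1..n+1})"
  shows "\<exists>i\<in>{1..n+1}. \<exists>G. (\<forall>k\<in>{1..n+1} - {i}. G k \<in> F k) \<and>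
           pierceable n (F i \<union> G ` ({1..n+1} - {i}))"
proof -
  have "pierceable_with_full_family n {1..n+1} F"
    using intervals nonempty colorful
    by (intro pierceable_with_full_family_if_colorful) (auto simp: colorful_pierceable_def)
  then show ?thesis
    unfolding pierceable_with_full_family_def .
qed

end
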